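(* Let $0<a<1$ and define $\eta:\mathbb C_+\to\mathbb C$, $\mathbb C_+=\{\operatorname{Re}w>0\}$, by $\eta(w)=w-(\log(w+3))^a$ (principal branches). Then $\eta$ is univalent on $\mathbb C_+$, and $\Omega_0=\eta(\mathbb C_+)$ is a logarithmic starlike at infinity domain with $p$-frequencies which is not contained in any half-plane.
   Context: A logarithmic starlike at infinity domain is $\{x+iy:x>\psi(y)\}$ where $\psi:\mathbb R\to\mathbb R$ is differentiable with $|\psi'|\le K$ for some $K>0$, and there exist $R>0$ and $0<b<1$ with $\psi(y)\ge -b\log|y|$ for $|y|\ge R$. Such a domain $\Omega_0$ has $p$-frequencies if there exists $p_0\ge1$ such that $e^{\lambda z}\in H^{p_0}(\Omega_0)$ for all $\lambda\le0$, where for a simply connected domain $G\subsetneq\mathbb C$ and $p\in[1,\infty)$, $H^p(G)$ is the space of holomorphic $f$ on $G$ such that $|f|^p$ has a harmonic majorant. *)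

theory Defs
  imports "HOL-Analysis.Analysis"
begin

text \<open>C^2 is expressed via existence of the first partials and existence and
continuity of all second partials (x = real direction, y = imaginary direction).\<close>
definition harmonic_on :: "(complex \<Rightarrow> real) \<Rightarrow> complex set \<Rightarrow> bool" where
  "harmonic_on u G \<longleftrightarrow> open G \<and>
     (\<exists>ux uy uxx uxy uyx uyy :: complex \<Rightarrow> real.
        (\<forall>z\<in>G.
           ((\<lambda>t. u (z + of_real t)) has_real_derivative ux z) (at 0) \<and>
           ((\<lambda>t. u (z + \<i> * of_real t)) has_real_derivative uy z) (at 0) \<and>
           ((\<lambda>t. ux (z + of_real t)) has_real_derivative uxx z) (at 0) \<and>
           ((\<lambda>t. ux (z + \<i> * of_real t)) has_real_derivative uxy z) (at 0) \<and>
           ((\<lambda>t. uy (z + of_real t)) has_real_derivative uyx z) (at 0) \<and>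
           ((\<lambda>t. uy (z + \<i> * of_real t)) has_real_derivative uyy z) (at 0) \<and>
           uxx z + uyy z = 0) \<and>
        continuous_on G uxx \<and> continuous_on G uxy \<and>
        continuous_on G uyx \<and> continuous_on G uyy)"

definition hardy_space :: "real \<Rightarrow> complex set \<Rightarrow> (complex \<Rightarrow> complex) set" where
  "hardy_space p G = {f. f holomorphic_on G \<and>
      (\<exists>u. harmonic_on u G \<and> (\<forall>z\<in>G. norm (f z) powr p \<le> u z))}"

definition log_starlike_at_infinity :: "complex set \<Rightarrow> bool" where
  "log_starlike_at_infinity \<Omega> \<longleftrightarrow>
     (\<exists>\<psi> :: real \<Rightarrow> real.
        (\<forall>y. \<psi> differentiable (at y)) \<and>
        (\<exists>K>0. \<forall>y. \<bar>deriv \<psi> y\<bar> \<le> K) \<and>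
        (\<exists>R>0. \<exists>b. 0 < b \<and> b < 1 \<and> (\<forall>y. \<bar>y\<bar> \<ge> R \<longrightarrow> \<psi> y \<ge> - b * ln \<bar>y\<bar>)) \<and>
        \<Omega> = {z. Re z > \<psi> (Im z)})"

definition has_p_frequencies :: "complex set \<Rightarrow> bool" where
  "has_p_frequencies \<Omega> \<longleftrightarrow>
     (\<exists>p0\<ge>1. \<forall>l::real. l \<le> 0 \<longrightarrow> (\<lambda>z. exp (of_real l * z)) \<in> hardy_space p0 \<Omega>)"

definition eta :: "real \<Rightarrow> complex \<Rightarrow> complex" where
  "eta a w = w - (Ln (w + 3)) powr (of_real a)"

end

theory Submission
  imports Defs "HOL-Complex_Analysis.Complex_Analysis"
begin

text \<open>
Write \<open>eta a w = w - g w\<close> with \<open>g w = (Ln (w + 3)) powr a\<close>. On the closed right half-plane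
\<open>|g'| \<le> a/3 < 1/3\<close>, so \<open>eta a\<close> is a 1/3-Lipschitz perturbation of the identity. Such a map is
injective, its imaginary part increases strictly along every vertical line, and each level set
\<open>{Im eta = y}\<close> is a graph over the real axis of slope at most 1/2 along which \<open>Re eta\<close> increases.
Hence the image of the right half-plane is the region to the right of the image of the imaginary
axis, a curve \<open>x = psi y\<close> with \<open>|psi'| \<le> 1/2\<close>. Since \<open>|g w| = |Ln (w + 3)|^a\<close> is sublinear in
\<open>log |w|\<close>, one gets \<open>psi y \<ge> -(1/2) log |y|\<close> and \<open>|exp (l * eta a w)| \<le> C * Re (sqrt (w + 3))\<close>
for \<open>l \<le> 0\<close>; the latter, pulled back by the inverse of \<open>eta a\<close>, is a harmonic majorant.
Finally \<open>Re g \<ge> 0\<close> puts the right half-plane inside the image, while \<open>Re g (1 + i t) \<rightarrow> \<infinity>\<close>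
pushes the image arbitrarily far to the left, so no half-plane contains it.
\<close>

lemma powr_le_linear_plus_const:
  fixes a e :: real
  assumes "0 \<le> a" "a < 1" "0 < e"
  obtains M where "0 \<le> M" "\<And>u. 0 \<le> u \<Longrightarrow> u powr a \<le> e * u + M"
proof -
  define N where "N = e powr (1 / (a - 1))"
  have "0 < N" using assms by (simp add: N_def)
  have N_powr: "N powr (a - 1) = e" using assms by (simp add: N_def powr_powr)
  have "u powr a \<le> e * u + N powr a" if "0 \<le> u" for u
  proof (cases "u \<le> N")
    case True
    then have "u powr a \<le> N powr a"
      using that assms by (intro powr_mono2) auto
    moreover have "0 \<le> e * u" using that assms by simp
    ultimately show ?thesis by linarith
  next
    case False
    then have "u powr a = u * u powr (a - 1)"
      using \<open>0 < N\<close> by (simp add: powr_mult_base)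
    also have "\<dots> \<le> u * N powr (a - 1)"
      using False \<open>0 < N\<close> assms by (intro mult_left_mono powr_mono2') auto
    finally have "u powr a \<le> e * u" using N_powr by (simp add: mult.commute)
    then show ?thesis using powr_ge_zero[of N a] by linarith
  qed
  then show thesis by (intro that[of "N powr a"]) simp_all
qed

lemma sqrt_norm_le_Re_csqrt:
  assumes "0 \<le> Re z"
  shows "sqrt (norm z) \<le> 2 * Re (csqrt z)"
proof -
  define s where "s = csqrt z"
  have z: "z = s\<^sup>2" by (simp add: s_def)
  have "(Im s)\<^sup>2 \<le> (Re s)\<^sup>2"
    using assms unfolding z by (simp add: power2_eq_square)
  moreover have "norm z = (Re s)\<^sup>2 + (Im s)\<^sup>2"
    unfolding z norm_power cmod_power2 ..
  ultimately have "norm z \<le> 4 * (Re s)\<^sup>2"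
    using zero_le_power2[of "Re s"] by linarith
  also have "\<dots> = (2 * Re s)\<^sup>2" by (simp add: power_mult_distrib)
  finally have "sqrt (norm z) \<le> sqrt ((2 * Re s)\<^sup>2)" by (rule real_sqrt_le_mono)
  also have "\<dots> = \<bar>2 * Re s\<bar>" by (rule real_sqrt_abs)
  also have "\<dots> = 2 * Re s" using Re_csqrt[of z] unfolding s_def[symmetric] by simp
  finally show ?thesis by (simp add: s_def)
qed

lemma has_real_derivative_Re_Im_along_line:
  assumes "(f has_field_derivative f') (at (z + c * of_real t))"
  shows "((\<lambda>t. Re (f (z + c * of_real t))) has_real_derivative Re (c * f')) (at t)"
    and "((\<lambda>t. Im (f (z + c * of_real t))) has_real_derivative Im (c * f')) (at t)"
proof -
  have "((\<lambda>x. z + c * x) has_field_derivative c) (at (of_real t))"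
    by (auto intro!: derivative_eq_intros)
  then have "((\<lambda>t. z + c * of_real t) has_vector_derivative c) (at t)"
    by (rule has_vector_derivative_real_field)
  from field_vector_diff_chain_at[OF this assms]
  have "((\<lambda>t. f (z + c * of_real t)) has_vector_derivative c * f') (at t)"
    by (simp add: o_def)
  then show "((\<lambda>t. Re (f (z + c * of_real t))) has_real_derivative Re (c * f')) (at t)"
    and "((\<lambda>t. Im (f (z + c * of_real t))) has_real_derivative Im (c * f')) (at t)"
    by (rule has_field_derivative_Re, rule has_field_derivative_Im)
qed

lemma has_real_derivative_Re_partials:
  assumes "(f has_field_derivative f') (at z)"
  shows "((\<lambda>t. Re (f (z + of_real t))) has_real_derivative Re f') (at 0)"
    and "((\<lambda>t. Re (f (z + \<i> * of_real t))) has_real_derivative Re (\<i> * f')) (at 0)"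
  using has_real_derivative_Re_Im_along_line(1)[of f f' z 1 0]
    has_real_derivative_Re_Im_along_line(1)[of f f' z \<i> 0] assms
  by simp_all

lemma harmonic_on_Re:
  assumes "open G" "f holomorphic_on G"
  shows "harmonic_on (\<lambda>z. Re (f z)) G"
proof -
  define f1 where "f1 = deriv f"
  define f2 where "f2 = deriv f1"
  have "f1 holomorphic_on G" unfolding f1_def by (rule holomorphic_deriv[OF assms(2,1)])
  then have "f2 holomorphic_on G" unfolding f2_def using assms(1) by (rule holomorphic_deriv)
  have f1: "(f has_field_derivative f1 z) (at z)" if "z \<in> G" for z
    unfolding f1_def using assms that by (intro holomorphic_derivI)
  have f2: "(f1 has_field_derivative f2 z) (at z)" if "z \<in> G" for z
    unfolding f2_def using \<open>f1 holomorphic_on G\<close> assms(1) that by (intro holomorphic_derivI)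
  have i_f2: "((\<lambda>z. \<i> * f1 z) has_field_derivative \<i> * f2 z) (at z)" if "z \<in> G" for z
    using f2[OF that] by (auto intro!: derivative_eq_intros)
  define ux uy uxx uxy uyy where "ux z = Re (f1 z)" and "uy z = Re (\<i> * f1 z)"
    and "uxx z = Re (f2 z)" and "uxy z = Re (\<i> * f2 z)" and "uyy z = Re (\<i> * (\<i> * f2 z))"
    for z
  have "continuous_on G f2" using \<open>f2 holomorphic_on G\<close> by (rule holomorphic_on_imp_continuous_on)
  then have "continuous_on G uxx" "continuous_on G uxy" "continuous_on G uyy"
    unfolding uxx_def uxy_def uyy_def by (intro continuous_intros; simp)+
  moreover have "\<forall>z\<in>G.
           ((\<lambda>t. Re (f (z + of_real t))) has_real_derivative ux z) (at 0) \<and>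
           ((\<lambda>t. Re (f (z + \<i> * of_real t))) has_real_derivative uy z) (at 0) \<and>
           ((\<lambda>t. ux (z + of_real t)) has_real_derivative uxx z) (at 0) \<and>
           ((\<lambda>t. ux (z + \<i> * of_real t)) has_real_derivative uxy z) (at 0) \<and>
           ((\<lambda>t. uy (z + of_real t)) has_real_derivative uxy z) (at 0) \<and>
           ((\<lambda>t. uy (z + \<i> * of_real t)) has_real_derivative uyy z) (at 0) \<and>
           uxx z + uyy z = 0" (is "\<forall>z\<in>G. ?partials z")
  proof
    fix z assume "z \<in> G"
    show "?partials z"
      unfolding ux_def uy_def uxx_def uxy_def uyy_def
      using has_real_derivative_Re_partials[OF f1] has_real_derivative_Re_partials[OF f2]
        has_real_derivative_Re_partials[OF i_f2] \<open>z \<in> G\<close> by simp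
  qed
  ultimately show ?thesis
    unfolding harmonic_on_def
    apply (intro conjI[OF assms(1)])
    apply (rule exI[of _ ux], rule exI[of _ uy], rule exI[of _ uxx], rule exI[of _ uxy],
      rule exI[of _ uxy], rule exI[of _ uyy])
    by blast
qed

lemma hardy_space_image_majorantI:
  assumes "open S" "f holomorphic_on S" "inj_on f S" "h holomorphic_on f ` S"
    and "H holomorphic_on S" "\<And>w. w \<in> S \<Longrightarrow> norm (h (f w)) powr p \<le> Re (H w)"
  shows "h \<in> hardy_space p (f ` S)"
proof -
  obtain g where g: "g holomorphic_on f ` S" "\<And>w. w \<in> S \<Longrightarrow> g (f w) = w"
    using holomorphic_has_inverse[OF assms(2,1,3)] by metis
  have "(H \<circ> g) holomorphic_on f ` S"
    using g assms(5) by (intro holomorphic_on_compose_gen) auto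
  then have "harmonic_on (\<lambda>z. Re (H (g z))) (f ` S)"
    using harmonic_on_Re open_mapping_thm3[OF assms(2,1,3)] by (simp add: o_def)
  moreover have "norm (h z) powr p \<le> Re (H (g z))" if "z \<in> f ` S" for z
    using that g(2) assms(6) by auto
  ultimately show ?thesis
    unfolding hardy_space_def using assms(4) by (intro CollectI conjI exI[of _ "\<lambda>z. Re (H (g z))"]) auto
qed

lemma right_half_plane_not_in_half_plane:
  assumes "c \<noteq> 0" "\<not> (Im c = 0 \<and> Re c < 0)"
  obtains z where "0 < Re z" "t \<le> Re (c * z)"
proof (cases "Im c = 0")
  case True
  with assms have "0 < Re c" by (auto simp: complex_eq_iff)
  let ?z = "of_real ((\<bar>t\<bar> + 1) / Re c)"
  have "0 < Re ?z" using \<open>0 < Re c\<close> by (simp add: add_pos_nonneg)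
  moreover have "Re (c * ?z) = \<bar>t\<bar> + 1" using \<open>0 < Re c\<close> True by simp
  ultimately show thesis by (intro that[of ?z]) auto
next
  case False
  let ?z = "Complex 1 (- Im c * (\<bar>t\<bar> + \<bar>Re c\<bar>) / (Im c)\<^sup>2)"
  have "Re (c * ?z) = Re c + (\<bar>t\<bar> + \<bar>Re c\<bar>)"
    using False by (simp add: power2_eq_square field_simps)
  then show thesis by (intro that[of ?z]) auto
qed

section \<open>Perturbations of the identity on the right half-plane\<close>

locale near_identity =
  fixes f f' :: "complex \<Rightarrow> complex"
  assumes has_deriv: "\<And>w. 0 \<le> Re w \<Longrightarrow> (f has_field_derivative f' w) (at w)"
    and deriv_near_one: "\<And>w. 0 \<le> Re w \<Longrightarrow> norm (f' w - 1) \<le> 1/3"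
begin

lemma isCont_f: "0 \<le> Re w \<Longrightarrow> isCont f w"
  using has_deriv DERIV_isCont by blast

lemma holomorphic_on_right_half_plane: "f holomorphic_on {w. 0 < Re w}"
proof -
  have "(f has_field_derivative f' w) (at w)" if "0 < Re w" for w
    using has_deriv that by simp
  then show ?thesis by (auto simp: holomorphic_on_open open_halfspace_Re_gt)
qed

lemma lipschitz_perturbation:
  assumes "0 \<le> Re w1" "0 \<le> Re w2"
  shows "3 * norm (f w2 - f w1 - (w2 - w1)) \<le> norm (w2 - w1)"
proof -
  let ?H = "{w. 0 \<le> Re w}"
  have "((\<lambda>w. f w - w) has_field_derivative f' w - 1) (at w within ?H)" if "w \<in> ?H" for w
    using DERIV_diff[OF has_deriv DERIV_ident] that by (simp add: has_field_derivative_at_within)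
  then have "norm ((f w2 - w2) - (f w1 - w1)) \<le> 1/3 * norm (w2 - w1)"
    by (intro field_differentiable_bound[OF convex_halfspace_Re_ge, of 0 "\<lambda>w. f w - w" "\<lambda>w. f' w - 1"])
      (use deriv_near_one assms in auto)
  then show ?thesis by (simp add: algebra_simps)
qed

lemma lipschitz_perturbation_coordinates:
  assumes "0 \<le> Re w1" "0 \<le> Re w2"
  shows "3 * norm (f w2 - f w1 - (w2 - w1)) \<le> \<bar>Re (w2 - w1)\<bar> + \<bar>Im (w2 - w1)\<bar>"
  using lipschitz_perturbation[OF assms] cmod_le[of "w2 - w1"] by linarith

lemma inj_on_right_half_plane: "inj_on f {w. 0 < Re w}"
proof (rule inj_onI)
  fix w1 w2 assume "w1 \<in> {w. 0 < Re w}" "w2 \<in> {w. 0 < Re w}" "f w1 = f w2"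
  then have "3 * norm (w2 - w1) \<le> norm (w2 - w1)"
    using lipschitz_perturbation[of w1 w2] by (simp add: norm_minus_commute)
  then show "w1 = w2" by simp
qed

lemma Im_mono_vertical:
  assumes "0 \<le> s" "t1 \<le> t2"
  shows "2 * (t2 - t1) \<le> 3 * (Im (f (Complex s t2)) - Im (f (Complex s t1)))"
proof -
  let ?d = "f (Complex s t2) - f (Complex s t1) - (Complex s t2 - Complex s t1)"
  have "3 * norm ?d \<le> t2 - t1"
    using lipschitz_perturbation_coordinates[of "Complex s t1" "Complex s t2"] assms by simp
  then show ?thesis using abs_Im_le_cmod[of ?d] by simp
qed

lemma same_level_Im:
  assumes "0 \<le> Re w1" "0 \<le> Re w2" "Im (f w1) = Im (f w2)"
  shows "2 * \<bar>Im (w2 - w1)\<bar> \<le> \<bar>Re (w2 - w1)\<bar>"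
    and "0 \<le> Re (w2 - w1) \<Longrightarrow> Re (w2 - w1) / 2 \<le> Re (f w2) - Re (f w1)"
proof -
  let ?d = "f w2 - f w1 - (w2 - w1)"
  have lip: "3 * norm ?d \<le> \<bar>Re (w2 - w1)\<bar> + \<bar>Im (w2 - w1)\<bar>"
    using lipschitz_perturbation_coordinates[OF assms(1,2)] .
  moreover have "\<bar>Im (w2 - w1)\<bar> \<le> norm ?d" using abs_Im_le_cmod[of ?d] assms(3) by simp
  ultimately show flat: "2 * \<bar>Im (w2 - w1)\<bar> \<le> \<bar>Re (w2 - w1)\<bar>" by linarith
  assume "0 \<le> Re (w2 - w1)"
  then have R: "\<bar>Re (w2 - w1)\<bar> = Re (w2 - w1)" by simp
  have "- Re ?d \<le> norm ?d" using abs_Re_le_cmod[of ?d] by (rule abs_le_D2)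
  moreover have "Re ?d = Re (f w2) - Re (f w1) - Re (w2 - w1)" by simp
  ultimately show "Re (w2 - w1) / 2 \<le> Re (f w2) - Re (f w1)"
    using flat[unfolded R] lip[unfolded R] by linarith
qed

text \<open>For \<open>0 \<le> s\<close>, the unique \<open>t\<close> with \<open>Im (f (s + i t)) = y\<close> (see \<open>Im_f_level_height\<close>);
  junk for \<open>s < 0\<close>.\<close>

definition level_height :: "real \<Rightarrow> real \<Rightarrow> real" where
  "level_height s y = (THE t. Im (f (Complex s t)) = y)"

lemma Im_f_vertical_surj:
  assumes "0 \<le> s"
  shows "\<exists>t. Im (f (Complex s t)) = y"
proof -
  let ?h = "\<lambda>t. Im (f (Complex s t))"
  have "isCont ?h t" for t
  proof -
    have "isCont (Complex s) t" unfolding isCont_def by (intro tendsto_intros)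
    moreover have "isCont f (Complex s t)" using assms by (intro isCont_f) simp
    ultimately have "isCont (\<lambda>t. f (Complex s t)) t" by (rule isCont_o2)
    then show ?thesis by (rule continuous_Im)
  qed
  then have "continuous_on UNIV ?h" by (simp add: continuous_at_imp_continuous_on)
  then have "continuous_on {-b..b} ?h" for b by (rule continuous_on_subset) simp
  define b where "b = 3/2 * \<bar>y - ?h 0\<bar>"
  have "0 \<le> b" by (simp add: b_def)
  have bounds: "2 * b \<le> 3 * (?h 0 - ?h (-b))" "2 * b \<le> 3 * (?h b - ?h 0)"
      "y - ?h 0 \<le> 2/3 * b" "?h 0 - y \<le> 2/3 * b"
    using Im_mono_vertical[OF assms, of "-b" 0] Im_mono_vertical[OF assms, of 0 b] \<open>0 \<le> b\<close>
    by (simp_all add: b_def)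
  have "?h (-b) \<le> y" using bounds by (simp add: algebra_simps)
  moreover have "y \<le> ?h b" using bounds by (simp add: algebra_simps)
  ultimately show ?thesis
    using IVT'[of ?h "-b" y b] \<open>continuous_on {-b..b} ?h\<close> \<open>0 \<le> b\<close> by auto
qed

lemma Im_f_level_height:
  assumes "0 \<le> s"
  shows "Im (f (Complex s (level_height s y))) = y"
proof -
  have "\<exists>!t. Im (f (Complex s t)) = y"
  proof (rule ex_ex1I)
    show "\<exists>t. Im (f (Complex s t)) = y" using Im_f_vertical_surj[OF assms] .
    show "t1 = t2" if "Im (f (Complex s t1)) = y" "Im (f (Complex s t2)) = y" for t1 t2
      using Im_mono_vertical[OF assms, of t1 t2] Im_mono_vertical[OF assms, of t2 t1] that
      by (cases "t1 \<le> t2") simp_all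
  qed
  then show ?thesis unfolding level_height_def by (rule theI')
qed

lemma level_height_lipschitz_Re:
  assumes "0 \<le> s1" "0 \<le> s2"
  shows "2 * \<bar>level_height s2 y - level_height s1 y\<bar> \<le> \<bar>s2 - s1\<bar>"
proof -
  let ?w1 = "Complex s1 (level_height s1 y)" and ?w2 = "Complex s2 (level_height s2 y)"
  have "Im (f ?w1) = Im (f ?w2)" using Im_f_level_height assms by simp
  then have "2 * \<bar>Im (?w2 - ?w1)\<bar> \<le> \<bar>Re (?w2 - ?w1)\<bar>"
    using assms by (intro same_level_Im(1)) simp_all
  then show ?thesis by simp
qed

lemma level_height_lipschitz_Im:
  assumes "0 \<le> s"
  shows "2 * \<bar>level_height s y2 - level_height s y1\<bar> \<le> 3 * \<bar>y2 - y1\<bar>"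
proof -
  have mono: "2 * \<bar>level_height s y2 - level_height s y1\<bar> \<le> 3 * \<bar>y2 - y1\<bar>"
    if "level_height s y1 \<le> level_height s y2" for y1 y2
    using Im_mono_vertical[OF assms that] Im_f_level_height[OF assms] that by simp
  show ?thesis
  proof (cases "level_height s y1 \<le> level_height s y2")
    case False
    then show ?thesis using mono[of y2 y1] by (simp add: abs_minus_commute)
  qed (rule mono)
qed

lemma continuous_on_level_height_Re: "continuous_on {0..} (\<lambda>s. level_height s y)"
proof (rule lipschitz_on_continuous_on[OF lipschitz_onI])
  show "dist (level_height s1 y) (level_height s2 y) \<le> 1 * dist s1 s2"
    if "s1 \<in> {0..}" "s2 \<in> {0..}" for s1 s2
  proof -
    have "2 * \<bar>level_height s1 y - level_height s2 y\<bar> \<le> \<bar>s1 - s2\<bar>"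
      using that by (intro level_height_lipschitz_Re) auto
    then show ?thesis unfolding dist_real_def by argo
  qed
qed simp

lemma isCont_level_height_Im:
  assumes "0 \<le> s"
  shows "isCont (level_height s) y"
proof -
  have "continuous_on UNIV (level_height s)"
  proof (rule lipschitz_on_continuous_on[OF lipschitz_onI])
    show "dist (level_height s y1) (level_height s y2) \<le> 3/2 * dist y1 y2" for y1 y2
      using level_height_lipschitz_Im[OF assms, of y1 y2] unfolding dist_real_def by argo
  qed simp
  then show ?thesis by (simp add: continuous_on_eq_continuous_at)
qed

lemma abs_level_height_le: "2 * \<bar>level_height 0 y\<bar> \<le> 3 * (\<bar>y\<bar> + norm (f 0))"
proof -
  define t where "t = level_height 0 y"
  let ?d = "f (Complex 0 t) - f 0 - Complex 0 t"
  have "3 * norm ?d \<le> \<bar>t\<bar>"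
    using lipschitz_perturbation_coordinates[of 0 "Complex 0 t"] by simp
  moreover have "Im ?d = y - Im (f 0) - t"
    using Im_f_level_height[of 0 y] by (simp add: t_def)
  moreover have "\<bar>Im ?d\<bar> \<le> norm ?d" "\<bar>Im (f 0)\<bar> \<le> norm (f 0)"
    by (rule abs_Im_le_cmod)+
  ultimately show ?thesis unfolding t_def by argo
qed

text \<open>The boundary function \<open>\<psi>\<close> of the paper: \<open>f\<close> maps the imaginary axis onto the curve
  \<open>Re z = psi (Im z)\<close>.\<close>

definition psi :: "real \<Rightarrow> real" where
  "psi y = Re (f (Complex 0 (level_height 0 y)))"

lemma continuous_on_vertical_level_curve:
  "continuous_on {0..} (\<lambda>s. f (Complex s (level_height s y)))"
proof -
  have "continuous_on {w. 0 \<le> Re w} f"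
    using isCont_f by (intro continuous_at_imp_continuous_on) auto
  moreover have "continuous_on {0..} (\<lambda>s. Complex s (level_height s y))"
    using continuous_on_level_height_Re unfolding Complex_eq by (intro continuous_intros)
  ultimately show ?thesis
    by (rule continuous_on_compose2) auto
qed

lemma image_right_half_plane: "f ` {w. 0 < Re w} = {z. psi (Im z) < Re z}"
proof (intro equalityI subsetI)
  fix z assume "z \<in> f ` {w. 0 < Re w}"
  then obtain w where w: "0 < Re w" "z = f w" by blast
  let ?w0 = "Complex 0 (level_height 0 (Im z))"
  have "Im (f ?w0) = Im (f w)" using Im_f_level_height[of 0] w by simp
  then have "Re (w - ?w0) / 2 \<le> Re (f w) - Re (f ?w0)"
    using w by (intro same_level_Im(2)) auto
  then show "z \<in> {z. psi (Im z) < Re z}" using w by (simp add: psi_def)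
next
  fix z assume "z \<in> {z. psi (Im z) < Re z}"
  define y where "y = Im z"
  define F where "F s = Re (f (Complex s (level_height s y)))" for s
  have "F 0 < Re z" using \<open>z \<in> _\<close> by (simp add: F_def psi_def y_def)
  define S where "S = 2 * (Re z - F 0)"
  have "0 \<le> S" using \<open>F 0 < Re z\<close> by (simp add: S_def)
  have "Im (f (Complex 0 (level_height 0 y))) = Im (f (Complex S (level_height S y)))"
    using Im_f_level_height \<open>0 \<le> S\<close> by simp
  then have "Re (Complex S (level_height S y) - Complex 0 (level_height 0 y)) / 2
      \<le> Re (f (Complex S (level_height S y))) - Re (f (Complex 0 (level_height 0 y)))"
    using \<open>0 \<le> S\<close> by (intro same_level_Im(2)) simp_all
  then have "S / 2 \<le> F S - F 0" by (simp add: F_def)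
  then have "Re z \<le> F S" by (simp add: S_def)
  moreover have "continuous_on {0..S} F"
    unfolding F_def using continuous_on_vertical_level_curve
    by (intro continuous_intros) (rule continuous_on_subset, auto)
  ultimately obtain s where s: "0 \<le> s" "s \<le> S" "F s = Re z"
    using IVT'[of F 0 "Re z" S] \<open>F 0 < Re z\<close> \<open>0 \<le> S\<close> by auto
  then have "0 < s" using \<open>F 0 < Re z\<close> by (cases "s = 0") auto
  moreover have "f (Complex s (level_height s y)) = z"
    using s Im_f_level_height[of s y] by (simp add: complex_eq_iff F_def y_def)
  ultimately show "z \<in> f ` {w. 0 < Re w}"
    by (intro image_eqI[of _ _ "Complex s (level_height s y)"]) auto
qed

lemma has_real_derivative_psi:
  fixes y :: real
  defines "w \<equiv> Complex 0 (level_height 0 y)"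
  shows "(psi has_real_derivative - Im (f' w) / Re (f' w)) (at y)"
proof -
  have line: "(\<lambda>t. Complex 0 t) = (\<lambda>t. 0 + \<i> * of_real t)" by (auto simp: complex_eq_iff)
  have deriv: "(f has_field_derivative f' (0 + \<i> * of_real t)) (at (0 + \<i> * of_real t))" for t
    by (rule has_deriv) simp
  have "2/3 \<le> Re (f' w)"
    using deriv_near_one[of w] abs_Re_le_cmod[of "f' w - 1"] by (simp add: w_def)
  have "((\<lambda>t. Im (f (Complex 0 t))) has_real_derivative Re (f' w)) (at (level_height 0 y))"
    using has_real_derivative_Re_Im_along_line(2)[OF deriv] unfolding line by (simp add: w_def line)
  then have "(level_height 0 has_real_derivative inverse (Re (f' w))) (at y)"
    using \<open>2/3 \<le> Re (f' w)\<close> Im_f_level_height isCont_level_height_Im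
    by (intro DERIV_inverse_function[where a = "y - 1" and b = "y + 1"]) auto
  moreover have "((\<lambda>t. Re (f (Complex 0 t))) has_real_derivative - Im (f' w)) (at (level_height 0 y))"
    using has_real_derivative_Re_Im_along_line(1)[OF deriv] unfolding line by (simp add: w_def line)
  ultimately have "(psi has_real_derivative - Im (f' w) * inverse (Re (f' w))) (at y)"
    unfolding psi_def[abs_def] by (rule DERIV_chain2[rotated])
  then show ?thesis by (simp add: divide_inverse)
qed

lemma differentiable_psi: "psi differentiable (at y)"
  using has_real_derivative_psi real_differentiable_def by blast

lemma abs_deriv_psi_le: "\<bar>deriv psi y\<bar> \<le> 1/2"
proof -
  define w where "w = Complex 0 (level_height 0 y)"
  have "norm (f' w - 1) \<le> 1/3" by (rule deriv_near_one) (simp add: w_def)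
  then have "\<bar>Im (f' w)\<bar> \<le> 1/3" "2/3 \<le> Re (f' w)"
    using abs_Im_le_cmod[of "f' w - 1"] abs_Re_le_cmod[of "f' w - 1"] by auto
  then have "\<bar>Im (f' w)\<bar> / Re (f' w) \<le> (1/3) / (2/3)"
    by (intro frac_le) auto
  moreover have "deriv psi y = - Im (f' w) / Re (f' w)"
    using DERIV_imp_deriv[OF has_real_derivative_psi[of y]] by (simp add: w_def)
  ultimately show ?thesis using \<open>2/3 \<le> Re (f' w)\<close> by simp
qed

lemma log_starlike_at_infinity_image:
  assumes "0 < R" "0 < b" "b < 1" "\<And>y. R \<le> \<bar>y\<bar> \<Longrightarrow> - b * ln \<bar>y\<bar> \<le> psi y"
  shows "log_starlike_at_infinity (f ` {w. 0 < Re w})"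
  unfolding log_starlike_at_infinity_def image_right_half_plane
  using differentiable_psi abs_deriv_psi_le assms
  by (intro exI[of _ psi] conjI exI[of _ "1/2"] exI[of _ R] exI[of _ b]) auto

end

section \<open>The map \<open>eta\<close>\<close>

definition eta_deriv :: "real \<Rightarrow> complex \<Rightarrow> complex" where
  "eta_deriv a w = 1 - of_real a * Ln (w + 3) powr (of_real a - 1) / (w + 3)"

lemma Ln_shift_bounds:
  assumes "0 \<le> Re w"
  shows "3 \<le> norm (w + 3)" "Re (Ln (w + 3)) = ln (norm (w + 3))" "1 \<le> Re (Ln (w + 3))"
    "norm (Ln (w + 3)) \<le> ln (norm (w + 3)) + 2"
proof -
  show "3 \<le> norm (w + 3)" using complex_Re_le_cmod[of "w + 3"] assms by simp
  then have "w + 3 \<noteq> 0" by auto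
  then show Re_Ln: "Re (Ln (w + 3)) = ln (norm (w + 3))" by (simp add: Re_Ln)
  have "1 \<le> ln (3::real)" using exp_le by (simp add: ln_ge_iff)
  also have "\<dots> \<le> ln (norm (w + 3))" using \<open>3 \<le> norm (w + 3)\<close> by (intro ln_mono) auto
  finally show "1 \<le> Re (Ln (w + 3))" using Re_Ln by simp
  have "\<bar>Im (Ln (w + 3))\<bar> \<le> 2"
    using Re_Ln_pos_lt_imp[of "w + 3"] assms pi_less_4 by simp
  then show "norm (Ln (w + 3)) \<le> ln (norm (w + 3)) + 2"
    using cmod_le[of "Ln (w + 3)"] Re_Ln \<open>1 \<le> ln (3::real)\<close> \<open>3 \<le> norm (w + 3)\<close> by simp
qed

lemma eta_has_field_derivative:
  assumes "0 \<le> Re w"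
  shows "(eta a has_field_derivative eta_deriv a w) (at w)"
proof -
  have "w + 3 \<notin> \<real>\<^sub>\<le>\<^sub>0" "Ln (w + 3) \<notin> \<real>\<^sub>\<le>\<^sub>0"
    using assms Ln_shift_bounds(3)[OF assms] by (auto simp: complex_nonpos_Reals_iff)
  have "((\<lambda>w. Ln (w + 3)) has_field_derivative inverse (w + 3)) (at w)"
    using DERIV_chain[OF has_field_derivative_Ln[OF \<open>w + 3 \<notin> _\<close>] DERIV_add[OF DERIV_ident DERIV_const]]
    by (simp add: o_def)
  from DERIV_chain[OF has_field_derivative_powr[OF \<open>Ln (w + 3) \<notin> _\<close>] this]
  have "((\<lambda>w. Ln (w + 3) powr of_real a) has_field_derivative
      of_real a * Ln (w + 3) powr (of_real a - 1) * inverse (w + 3)) (at w)"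
    by (simp add: o_def)
  from DERIV_diff[OF DERIV_ident this] show ?thesis
    by (simp add: eta_def[abs_def] eta_deriv_def divide_inverse)
qed

lemma norm_eta_deriv_minus_one_le:
  assumes "0 \<le> Re w" "0 \<le> a" "a \<le> 1"
  shows "norm (eta_deriv a w - 1) \<le> 1/3"
proof -
  have "1 \<le> norm (Ln (w + 3))"
    using Ln_shift_bounds(3)[OF assms(1)] complex_Re_le_cmod[of "Ln (w + 3)"] by linarith
  then have "norm (Ln (w + 3)) powr (a - 1) \<le> norm (Ln (w + 3)) powr 0"
    using assms by (intro powr_mono) auto
  then have powr_le_1: "norm (Ln (w + 3)) powr (a - 1) \<le> 1"
    using \<open>1 \<le> norm (Ln (w + 3))\<close> by (auto split: if_splits)
  have "norm (eta_deriv a w - 1) = a * norm (Ln (w + 3)) powr (a - 1) / norm (w + 3)"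
    using assms by (simp add: eta_deriv_def norm_mult norm_divide norm_powr_real_powr')
  also have "\<dots> \<le> a * 1 / 3"
    using powr_le_1 assms Ln_shift_bounds(1)[OF assms(1)] by (intro frac_le mult_left_mono) auto
  also have "\<dots> \<le> 1/3" using assms by simp
  finally show ?thesis .
qed

lemma near_identity_eta:
  assumes "0 \<le> a" "a \<le> 1"
  shows "near_identity (eta a) (eta_deriv a)"
proof
  show "(eta a has_field_derivative eta_deriv a w) (at w)" if "0 \<le> Re w" for w
    using that by (rule eta_has_field_derivative)
  show "norm (eta_deriv a w - 1) \<le> 1/3" if "0 \<le> Re w" for w
    using that assms by (rule norm_eta_deriv_minus_one_le)
qed

lemma Re_Ln_shift_powr_ge:
  assumes "0 \<le> Re w" "0 \<le> a" "a \<le> 1"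
  shows "cos (a * pi / 2) * norm (Ln (w + 3)) powr a \<le> Re (Ln (w + 3) powr of_real a)"
proof -
  let ?L = "Ln (w + 3)"
  have "0 < Re ?L" using Ln_shift_bounds(3)[OF assms(1)] by simp
  then have "?L \<noteq> 0" by auto
  have "Re (?L powr of_real a) = norm ?L powr a * cos (a * Im (Ln ?L))"
    using \<open>?L \<noteq> 0\<close> by (simp add: powr_def Re_exp Re_Ln mult.commute)
  moreover have "\<bar>Im (Ln ?L)\<bar> \<le> pi / 2" using Re_Ln_pos_lt_imp[OF \<open>0 < Re ?L\<close>] by simp
  then have "a * \<bar>Im (Ln ?L)\<bar> \<le> a * (pi / 2)" by (rule mult_left_mono) (use assms in simp)
  then have "\<bar>a * Im (Ln ?L)\<bar> \<le> a * (pi / 2)" using assms by (simp add: abs_mult)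
  then have "cos (a * pi / 2) \<le> cos (a * Im (Ln ?L))"
    using assms cos_monotone_0_pi_le[of "\<bar>a * Im (Ln ?L)\<bar>" "a * pi / 2"] by simp
  ultimately show ?thesis
    using mult_left_mono[of "cos (a * pi / 2)" "cos (a * Im (Ln ?L))" "norm ?L powr a"]
    by (simp add: mult.commute)
qed

lemma cos_mult_pi_half_pos:
  assumes "0 \<le> a" "a < 1"
  shows "0 < cos (a * pi / 2)"
proof (rule cos_gt_zero_pi)
  have "0 \<le> a * pi" using assms by simp
  then show "- (pi / 2) < a * pi / 2" using pi_gt_zero by linarith
  show "a * pi / 2 < pi / 2" using assms by simp
qed

locale eta_parameter =
  fixes a :: real
  assumes a_pos: "0 < a" and a_less_one: "a < 1"

sublocale eta_parameter \<subseteq> near_identity "eta a" "eta_deriv a"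
  using a_pos a_less_one by (intro near_identity_eta) auto

context eta_parameter
begin

lemma Re_eta_le_Re:
  assumes "0 \<le> Re w"
  shows "Re (eta a w) \<le> Re w"
proof -
  have "0 \<le> cos (a * pi / 2) * norm (Ln (w + 3)) powr a"
    using cos_mult_pi_half_pos[of a] a_pos a_less_one by simp
  also have "\<dots> \<le> Re (Ln (w + 3) powr of_real a)"
    using assms a_pos a_less_one by (intro Re_Ln_shift_powr_ge) auto
  finally show ?thesis by (simp add: eta_def)
qed

lemma psi_nonpos: "psi y \<le> 0"
  using Re_eta_le_Re[of "Complex 0 (level_height 0 y)"] by (simp add: psi_def)

lemma right_half_plane_subset_image: "{z. 0 < Re z} \<subseteq> eta a ` {w. 0 < Re w}"
  using psi_nonpos image_right_half_plane by (auto intro: le_less_trans)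

lemma norm_Ln_level_le:
  assumes "2 + norm (eta a 0) \<le> \<bar>y\<bar>"
  shows "norm (Ln (Complex 0 (level_height 0 y) + 3)) \<le> ln \<bar>y\<bar> + 4"
proof -
  define t where "t = level_height 0 y"
  have "norm (Complex 0 t + 3) \<le> 3 + \<bar>t\<bar>" using cmod_le[of "Complex 0 t + 3"] by simp
  also have "\<dots> \<le> 3 * \<bar>y\<bar>" using abs_level_height_le[of y] assms unfolding t_def by argo
  finally have "ln (norm (Complex 0 t + 3)) \<le> ln (3 * \<bar>y\<bar>)"
    using Ln_shift_bounds(1)[of "Complex 0 t"] by (intro ln_mono) auto
  also have "\<dots> = ln 3 + ln \<bar>y\<bar>"
  proof -
    have "0 < \<bar>y\<bar>" using assms norm_ge_zero[of "eta a 0"] by linarith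
    then show ?thesis by (simp add: ln_mult)
  qed
  also have "\<dots> \<le> 2 + ln \<bar>y\<bar>" using ln_le_minus_one[of 3] by simp
  finally show ?thesis
    using Ln_shift_bounds(4)[of "Complex 0 t"] unfolding t_def by simp
qed

lemma psi_ge_minus_half_ln:
  obtains R where "0 < R" "\<And>y. R \<le> \<bar>y\<bar> \<Longrightarrow> - (1/2) * ln \<bar>y\<bar> \<le> psi y"
proof -
  obtain M where "0 \<le> M" and M: "\<And>u. 0 \<le> u \<Longrightarrow> u powr a \<le> 1/4 * u + M"
    using powr_le_linear_plus_const[of a "1/4"] a_pos a_less_one by auto
  define R where "R = max (2 + norm (eta a 0)) (exp (4 + 4 * M))"
  have "- (1/2) * ln \<bar>y\<bar> \<le> psi y" if "R \<le> \<bar>y\<bar>" for y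
  proof -
    let ?L = "Ln (Complex 0 (level_height 0 y) + 3)"
    have "exp (4 + 4 * M) \<le> \<bar>y\<bar>" using that by (simp add: R_def)
    then have "4 + 4 * M \<le> ln \<bar>y\<bar>"
      by (subst ln_ge_iff) (auto intro: less_le_trans[OF exp_gt_zero])
    have "norm ?L \<le> ln \<bar>y\<bar> + 4" using that by (intro norm_Ln_level_le) (simp add: R_def)
    then have "norm ?L powr a \<le> (ln \<bar>y\<bar> + 4) powr a" using a_pos by (intro powr_mono2) auto
    also have "\<dots> \<le> 1/4 * (ln \<bar>y\<bar> + 4) + M" using \<open>4 + 4 * M \<le> _\<close> \<open>0 \<le> M\<close> by (intro M) simp
    also have "\<dots> \<le> (1/2) * ln \<bar>y\<bar>" using \<open>4 + 4 * M \<le> _\<close> by argo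
    finally have "norm ?L powr a \<le> (1/2) * ln \<bar>y\<bar>" .
    moreover have "- (norm ?L powr a) \<le> psi y"
      using complex_Re_le_cmod[of "?L powr of_real a"]
      by (simp add: psi_def eta_def norm_powr_real_powr')
    ultimately show ?thesis by simp
  qed
  moreover have "0 < R" by (simp add: R_def less_max_iff_disj)
  ultimately show thesis using that by blast
qed

lemma log_starlike_at_infinity_eta_image: "log_starlike_at_infinity (eta a ` {w. 0 < Re w})"
proof -
  obtain R where "0 < R" "\<And>y. R \<le> \<bar>y\<bar> \<Longrightarrow> - (1/2) * ln \<bar>y\<bar> \<le> psi y"
    using psi_ge_minus_half_ln by blast
  then show ?thesis by (intro log_starlike_at_infinity_image[of R "1/2"]) auto
qed

lemma exp_Re_eta_le_Re_csqrt:
  assumes "l \<le> 0"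
  obtains C where "\<And>w. 0 < Re w \<Longrightarrow> exp (l * Re (eta a w)) \<le> C * Re (csqrt (w + 3))"
proof -
  txt \<open>\<open>e\<close> is chosen so that \<open>-l * e \<le> 1/2\<close>, which turns the sublinear bound on \<open>|Ln (w + 3)|^a\<close>
    into \<open>exp (l * Re (eta a w)) \<le> K * |w + 3|^(1/2)\<close>.\<close>
  define e where "e = 1 / (2 - 2 * l)"
  have "0 < e" "- l * e \<le> 1/2" using assms by (simp_all add: e_def field_simps)
  obtain M where "0 \<le> M" and M: "\<And>u. 0 \<le> u \<Longrightarrow> u powr a \<le> e * u + M"
    using powr_le_linear_plus_const[of a e] a_pos a_less_one \<open>0 < e\<close> by auto
  define K where "K = exp (1 - l * M)"
  have "exp (l * Re (eta a w)) \<le> 2 * K * Re (csqrt (w + 3))" if "0 < Re w" for w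
  proof -
    let ?L = "Ln (w + 3)" and ?r = "norm (w + 3)"
    have "3 \<le> ?r" using that by (intro Ln_shift_bounds(1)) simp
    then have "0 < ?r" by linarith
    have "- Re (eta a w) \<le> norm ?L powr a"
      using that complex_Re_le_cmod[of "?L powr of_real a"] by (simp add: eta_def norm_powr_real_powr')
    also have "\<dots> \<le> e * norm ?L + M" by (rule M) simp
    finally have "- l * - Re (eta a w) \<le> - l * (e * norm ?L + M)"
      using assms by (intro mult_left_mono) auto
    then have "l * Re (eta a w) \<le> - l * (e * norm ?L + M)" by simp
    also have "\<dots> \<le> 1/2 * norm ?L - l * M"
      using mult_right_mono[OF \<open>- l * e \<le> 1/2\<close> norm_ge_zero[of ?L]] by (simp add: algebra_simps)
    also have "\<dots> \<le> ln ?r / 2 + (1 - l * M)"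
      using Ln_shift_bounds(4)[of w] that by simp
    finally have "exp (l * Re (eta a w)) \<le> exp (ln ?r / 2) * K"
      by (simp add: K_def exp_add[symmetric])
    also have "exp (ln ?r / 2) = sqrt ?r"
      using \<open>0 < ?r\<close> by (simp add: powr_half_sqrt[symmetric] powr_def)
    also have "sqrt ?r * K \<le> 2 * Re (csqrt (w + 3)) * K"
      using that by (intro mult_right_mono sqrt_norm_le_Re_csqrt) (auto simp: K_def)
    finally show ?thesis by (simp only: mult_ac)
  qed
  then show thesis by (rule that)
qed

lemma has_p_frequencies_eta_image: "has_p_frequencies (eta a ` {w. 0 < Re w})"
  unfolding has_p_frequencies_def
proof (intro exI[of _ 1] conjI allI impI)
  fix l :: real assume "l \<le> 0"
  then obtain C where C: "\<And>w. 0 < Re w \<Longrightarrow> exp (l * Re (eta a w)) \<le> C * Re (csqrt (w + 3))"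
    using exp_Re_eta_le_Re_csqrt by blast
  have "(\<lambda>w. of_real C * csqrt (w + 3)) holomorphic_on {w. 0 < Re w}"
    by (intro holomorphic_intros) (auto simp: complex_nonpos_Reals_iff)
  then show "(\<lambda>z. exp (of_real l * z)) \<in> hardy_space 1 (eta a ` {w. 0 < Re w})"
    using C holomorphic_on_right_half_plane inj_on_right_half_plane
    by (intro hardy_space_image_majorantI[where H = "\<lambda>w. of_real C * csqrt (w + 3)"])
      (auto simp: open_halfspace_Re_gt intro!: holomorphic_intros)
qed simp

lemma Re_eta_unbounded_below: "\<exists>w. 0 < Re w \<and> Re (eta a w) \<le> - M"
proof -
  define \<kappa> where "\<kappa> = cos (a * pi / 2)"
  have "0 < \<kappa>" unfolding \<kappa>_def using a_pos a_less_one by (intro cos_mult_pi_half_pos) auto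
  define Q where "Q = (1 + \<bar>M\<bar>) / \<kappa>"
  have "0 < Q" using \<open>0 < \<kappa>\<close> by (simp add: Q_def add_pos_nonneg)
  define w where "w = Complex 1 (exp (Q powr (1 / a)))"
  have "exp (Q powr (1 / a)) \<le> norm (w + 3)"
    using abs_Im_le_cmod[of "w + 3"] by (simp add: w_def)
  then have "Q powr (1 / a) \<le> ln (norm (w + 3))"
    by (subst ln_ge_iff) (use Ln_shift_bounds(1)[of w] in \<open>auto simp: w_def\<close>)
  also have "\<dots> = Re (Ln (w + 3))" using Ln_shift_bounds(2)[of w] by (simp add: w_def)
  also have "\<dots> \<le> norm (Ln (w + 3))" by (rule complex_Re_le_cmod)
  finally have "Q \<le> norm (Ln (w + 3)) powr a"
    using powr_mono2[of a "Q powr (1 / a)"] \<open>0 < Q\<close> a_pos by (simp add: powr_powr)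
  then have "\<kappa> * Q \<le> \<kappa> * norm (Ln (w + 3)) powr a" using \<open>0 < \<kappa>\<close> by simp
  also have "\<dots> \<le> Re (Ln (w + 3) powr of_real a)"
    unfolding \<kappa>_def using a_pos a_less_one by (intro Re_Ln_shift_powr_ge) (auto simp: w_def)
  finally have "\<kappa> * Q \<le> Re (Ln (w + 3) powr of_real a)" .
  then have "Re (eta a w) \<le> - M"
    using \<open>0 < \<kappa>\<close> by (simp add: eta_def w_def Q_def)
  then show ?thesis by (intro exI[of _ w]) (simp add: w_def)
qed

lemma eta_image_not_in_half_plane:
  assumes "c \<noteq> 0"
  shows "\<not> eta a ` {w. 0 < Re w} \<subseteq> {z. Re (c * z) < t}"
proof
  assume sub: "eta a ` {w. 0 < Re w} \<subseteq> {z. Re (c * z) < t}"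
  show False
  proof (cases "Im c = 0 \<and> Re c < 0")
    case True
    obtain w where "0 < Re w" "Re (eta a w) \<le> - (\<bar>t\<bar> / \<bar>Re c\<bar>)"
      using Re_eta_unbounded_below by blast
    then have "\<bar>t\<bar> \<le> Re c * Re (eta a w)"
      using True mult_left_mono_neg[of "Re (eta a w)" "- (\<bar>t\<bar> / \<bar>Re c\<bar>)" "Re c"] by simp
    then show False using sub \<open>0 < Re w\<close> True by fastforce
  next
    case False
    then obtain z where "0 < Re z" "t \<le> Re (c * z)"
      using right_half_plane_not_in_half_plane[OF assms] by blast
    then show False using sub right_half_plane_subset_image by fastforce
  qed
qed

end

theorem proposition10p2:
  fixes a :: real
  assumes "0 < a" and "a < 1"
  shows "eta a holomorphic_on {w. 0 < Re w} \<and> inj_on (eta a) {w. 0 < Re w}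
    \<and> log_starlike_at_infinity (eta a ` {w. 0 < Re w})
    \<and> has_p_frequencies (eta a ` {w. 0 < Re w})
    \<and> \<not> (\<exists>c t. c \<noteq> 0 \<and> eta a ` {w. 0 < Re w} \<subseteq> {z. Re (c * z) < t})"
proof -
  interpret eta_parameter a using assms by unfold_locales
  show ?thesis
    using holomorphic_on_right_half_plane inj_on_right_half_plane
      log_starlike_at_infinity_eta_image has_p_frequencies_eta_image eta_image_not_in_half_plane
    by blast
qed

end
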